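(* Let $(\mathcal Q,d)$ be a Hadamard space, $Y$ a $\mathcal Q$-valued random variable, $o\in\mathcal Q$, and $\tau\in\mathcal S_0^+$ with $\mathbb E[\tau'(d(Y,o))]<\infty$. Then: (i) the variance functional $v:\mathcal Q\to\mathbb R$, $v(q):=\mathbb E[\tau(d(Y,q))-\tau(d(Y,o))]$, is (well-defined and) convex; (ii) the set $M:=\arg\min_{q\in\mathcal Q}v(q)$ of $\tau$-Fréchet means is nonempty, closed, bounded and convex, and does not depend on the choice of $o$; (iii) if $\mathcal Y\subset\mathcal Q$ is closed and convex with $\mathbb P(Y\in\mathcal Y)=1$, then $M\subset\mathcal Y$.
   Context: A Hadamard space is a complete metric space $(\mathcal Q,d)$ such that for all $y_0,y_1$ there is $m$ with $\frac12 d(y_0,q)^2+\frac12 d(y_1,q)^2-\frac14 d(y_0,y_1)^2\ge d(q,m)^2$ for all $q$; in it any $q\ne p$ are joined by a unique unit-speed geodesic $\gamma_{q\to p}:[0,d(q,p)]\to\mathcal Q$. A set $A\subset\mathcal Q$ is convex if $\gamma_{q\to p}$ has image in $A$ for all $q\ne p$ in $A$; a function $f:\mathcal Q\to\mathbb R$ is convex if $f\circ\gamma_{q\to p}$ is convex for all $q\ne p$. $\mathcal S_0^+$ is the set of nondecreasing convex $\tau:[0,\infty)\to\mathbb R$, differentiable on $(0,\infty)$ with concave derivative $\tau'$ (with $\tau'(0):=\lim_{x\searrow0}\tau'(x)$), such that $\tau(0)=0$ and $\tau'(x)>0$ for $x>0$. *)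

theory Defs
  imports "HOL-Analysis.Analysis" "HOL-Probability.Probability"
begin

definition hadamard :: "'q::complete_space itself \<Rightarrow> bool" where
  "hadamard _ \<longleftrightarrow> (\<forall>y0 y1::'q. \<exists>m. \<forall>q.
     (1/2) * (dist y0 q)\<^sup>2 + (1/2) * (dist y1 q)\<^sup>2 - (1/4) * (dist y0 y1)\<^sup>2 \<ge> (dist q m)\<^sup>2)"

definition geodesic_between :: "'q::metric_space \<Rightarrow> 'q \<Rightarrow> (real \<Rightarrow> 'q) \<Rightarrow> bool" where
  "geodesic_between q p \<gamma> \<longleftrightarrow> \<gamma> 0 = q \<and> \<gamma> (dist q p) = p \<and>
     (\<forall>s\<in>{0..dist q p}. \<forall>t\<in>{0..dist q p}. dist (\<gamma> s) (\<gamma> t) = \<bar>s - t\<bar>)"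

definition geod_convex_set :: "'q::metric_space set \<Rightarrow> bool" where
  "geod_convex_set A \<longleftrightarrow> (\<forall>q\<in>A. \<forall>p\<in>A. q \<noteq> p \<longrightarrow>
     (\<forall>\<gamma>. geodesic_between q p \<gamma> \<longrightarrow> \<gamma> ` {0..dist q p} \<subseteq> A))"

definition geod_convex_fun :: "('q::metric_space \<Rightarrow> real) \<Rightarrow> bool" where
  "geod_convex_fun f \<longleftrightarrow> (\<forall>q p. q \<noteq> p \<longrightarrow>
     (\<forall>\<gamma>. geodesic_between q p \<gamma> \<longrightarrow> convex_on {0..dist q p} (f \<circ> \<gamma>)))"

definition tau_deriv :: "(real \<Rightarrow> real) \<Rightarrow> real \<Rightarrow> real" where
  "tau_deriv \<tau> x = (if x = 0 then Lim (at_right 0) (deriv \<tau>) else deriv \<tau> x)"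

definition S0plus :: "(real \<Rightarrow> real) set" where
  "S0plus = {\<tau>. mono_on {0..} \<tau> \<and> convex_on {0..} \<tau> \<and>
     (\<forall>x>0. \<tau> differentiable (at x)) \<and> concave_on {0<..} (deriv \<tau>) \<and>
     \<tau> 0 = 0 \<and> (\<forall>x>0. deriv \<tau> x > 0)}"

definition var_fun :: "'w measure \<Rightarrow> ('w \<Rightarrow> 'q::metric_space) \<Rightarrow> (real \<Rightarrow> real) \<Rightarrow> 'q \<Rightarrow> 'q \<Rightarrow> real" where
  "var_fun P Y \<tau> x0 q = (\<integral>\<omega>. \<tau> (dist (Y \<omega>) q) - \<tau> (dist (Y \<omega>) x0) \<partial>P)"

definition frechet_means :: "'w measure \<Rightarrow> ('w \<Rightarrow> 'q::metric_space) \<Rightarrow> (real \<Rightarrow> real) \<Rightarrow> 'q \<Rightarrow> 'q set" where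
  "frechet_means P Y \<tau> x0 = {q. \<forall>q'. var_fun P Y \<tau> x0 q \<le> var_fun P Y \<tau> x0 q'}"

end

theory Submission
  imports Defs
begin

text \<open>Since \<open>\<tau>\<close> is nondecreasing and convex and \<open>dist y c \<le> (dist y a + dist y b)/2\<close> for the
  midpoint \<open>c\<close> of \<open>a\<close> and \<open>b\<close>, the variance functional \<open>v\<close> is midpoint convex; integrability of
  \<open>\<tau>'(d(Y,o))\<close> together with the doubling bound \<open>\<tau>'(2t) \<le> 3 \<tau>'(t)\<close> (from concavity of \<open>\<tau>'\<close>)
  makes \<open>v\<close> finite and locally Lipschitz, so \<open>v\<close> is convex along geodesics. As \<open>v\<close> grows at least
  linearly, its sublevel sets are bounded; they are closed under midpoints, and the midpoint
  inequality forces near-closest points of such nested sets to form a Cauchy sequence, which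
  gives a minimiser by completeness. Finally, the projection onto a closed convex set \<open>C\<close> is strictly
  closer to every point of \<open>C\<close> than a point outside \<open>C\<close>, so a mean outside the support set \<open>C\<close>
  could be improved.\<close>

section \<open>Cost functions in \<open>S0plus\<close>\<close>

text \<open>\<open>tau_slope \<tau>\<close> is \<open>\<tau>'\<close> on \<open>(0, \<infinity>)\<close> and \<open>0\<close> elsewhere: monotone on all of \<open>\<real>\<close>, a Lipschitz
  bound for \<open>\<tau>\<close>, and dominated by \<open>tau_deriv \<tau>\<close> (whose value at \<open>0\<close> is a one-sided limit).\<close>
definition tau_slope :: "(real \<Rightarrow> real) \<Rightarrow> real \<Rightarrow> real" where
  "tau_slope \<tau> x = (if x \<le> 0 then 0 else deriv \<tau> x)"

context
  fixes \<tau> :: "real \<Rightarrow> real"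
  assumes \<tau>: "\<tau> \<in> S0plus"
begin

lemma S0plus_mono: "0 \<le> a \<Longrightarrow> a \<le> b \<Longrightarrow> \<tau> a \<le> \<tau> b"
  using \<tau> unfolding S0plus_def mono_on_def by auto

lemma S0plus_convex: "convex_on {0..} \<tau>"
  using \<tau> unfolding S0plus_def by auto

lemma S0plus_deriv_pos: "x > 0 \<Longrightarrow> deriv \<tau> x > 0"
  using \<tau> unfolding S0plus_def by auto

lemma S0plus_above_tangent:
  assumes "c > 0" "x \<ge> 0"
  shows "\<tau> x - \<tau> c \<ge> deriv \<tau> c * (x - c)"
proof (rule convex_on_imp_above_tangent[OF S0plus_convex])
  have "\<tau> differentiable (at c)" using \<tau> assms(1) unfolding S0plus_def by auto
  then show "(\<tau> has_real_derivative deriv \<tau> c) (at c within {0..})"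
    by (simp add: DERIV_deriv_iff_real_differentiable has_field_derivative_at_within)
qed (use assms in \<open>auto simp: is_interval_connected\<close>)

lemma tau_slope_nonneg: "tau_slope \<tau> x \<ge> 0"
  unfolding tau_slope_def using S0plus_deriv_pos by (auto simp: less_imp_le)

lemma mono_tau_slope: "mono (tau_slope \<tau>)"
proof
  fix a b :: real assume "a \<le> b"
  have "deriv \<tau> a \<le> deriv \<tau> b" if "0 < a" "a < b"
  proof -
    have "deriv \<tau> a * (b - a) \<le> deriv \<tau> b * (b - a)"
      using S0plus_above_tangent[of a b] S0plus_above_tangent[of b a] that
      by (simp add: algebra_simps)
    then show ?thesis using that by simp
  qed
  then show "tau_slope \<tau> a \<le> tau_slope \<tau> b"
    using \<open>a \<le> b\<close> S0plus_deriv_pos unfolding tau_slope_def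
    by (cases "a = b") (auto simp: less_imp_le)
qed

lemma S0plus_diff_le_slope:
  assumes "0 \<le> b" "b \<le> a"
  shows "\<tau> a - \<tau> b \<le> tau_slope \<tau> a * (a - b)"
proof (cases "a = 0")
  case False
  then show ?thesis
    using S0plus_above_tangent[of a b] assms unfolding tau_slope_def by (auto simp: algebra_simps)
qed (use assms in simp)

lemma S0plus_abs_diff_le_slope:
  assumes "0 \<le> a" "0 \<le> b"
  shows "\<bar>\<tau> a - \<tau> b\<bar> \<le> tau_slope \<tau> (max a b) * \<bar>a - b\<bar>"
  using S0plus_diff_le_slope[of a b] S0plus_diff_le_slope[of b a] S0plus_mono[of a b]
    S0plus_mono[of b a] assms
  by (cases "b \<le> a") (auto simp: max_def)

text \<open>Concavity of \<open>\<tau>'\<close> gives \<open>\<tau>'(t) \<ge> (2/3) \<tau>'(t/2) + (1/3) \<tau>'(2t)\<close>, hence the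
  doubling bound \<open>\<tau>'(2t) \<le> 3 \<tau>'(t)\<close>.\<close>
lemma tau_slope_add_le:
  assumes "0 \<le> x" "0 \<le> y"
  shows "tau_slope \<tau> (x + y) \<le> 3 * (tau_slope \<tau> x + tau_slope \<tau> y)"
proof (cases "x + y \<le> 0")
  case True
  then show ?thesis using tau_slope_nonneg[of x] tau_slope_nonneg[of y] by (simp add: tau_slope_def)
next
  case False
  define t where "t = max x y"
  have t: "t > 0" using False assms unfolding t_def by auto
  have "(1 - 1/3) * deriv \<tau> (t/2) + (1/3) * deriv \<tau> (2*t)
      \<le> deriv \<tau> ((1 - 1/3) *\<^sub>R (t/2) + (1/3) *\<^sub>R (2*t))"
    using \<tau> t unfolding S0plus_def by (intro concave_onD) auto
  then have double: "deriv \<tau> (2*t) \<le> 3 * deriv \<tau> t"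
    using S0plus_deriv_pos[of "t/2"] t by simp
  have "tau_slope \<tau> (x + y) \<le> tau_slope \<tau> (2*t)"
    using mono_tau_slope by (rule monoD) (simp add: t_def)
  also have "\<dots> \<le> 3 * tau_slope \<tau> t" using double t by (simp add: tau_slope_def)
  also have "tau_slope \<tau> t \<le> tau_slope \<tau> x + tau_slope \<tau> y"
    using tau_slope_nonneg[of x] tau_slope_nonneg[of y] by (auto simp: t_def max_def)
  finally show ?thesis by simp
qed

lemma S0plus_strict_mono:
  assumes "0 \<le> a" "a < b"
  shows "\<tau> a < \<tau> b"
proof -
  have "0 < deriv \<tau> ((a+b)/2) * (b - (a+b)/2)" using S0plus_deriv_pos[of "(a+b)/2"] assms by auto
  also have "\<dots> \<le> \<tau> b - \<tau> ((a+b)/2)" using S0plus_above_tangent[of "(a+b)/2" b] assms by auto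
  moreover have "\<tau> a \<le> \<tau> ((a+b)/2)" using S0plus_mono assms by simp
  ultimately show ?thesis by linarith
qed

lemma S0plus_le_midpoint:
  assumes "0 \<le> s" "0 \<le> t" "0 \<le> r" "r \<le> (s+t)/2"
  shows "\<tau> r \<le> (\<tau> s + \<tau> t)/2"
proof -
  have "\<tau> r \<le> \<tau> ((1 - 1/2) *\<^sub>R s + (1/2) *\<^sub>R t)" using S0plus_mono assms by auto
  also have "\<dots> \<le> (1 - 1/2) * \<tau> s + (1/2) * \<tau> t"
    by (rule convex_onD[OF S0plus_convex]) (use assms in auto)
  finally show ?thesis by simp
qed

lemma S0plus_ge_linear: "x \<ge> 0 \<Longrightarrow> \<tau> x \<ge> deriv \<tau> 1 * (x - 1)"
  using S0plus_above_tangent[of 1 x] S0plus_mono[of 0 1] \<tau> unfolding S0plus_def by auto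

lemma borel_measurable_S0plus_max: "(\<lambda>x. \<tau> (max x 0)) \<in> borel_measurable borel"
  by (rule borel_measurable_mono) (auto simp: mono_def intro!: S0plus_mono)

lemma tau_slope_le_tau_deriv: "x \<ge> 0 \<Longrightarrow> ennreal (tau_slope \<tau> x) \<le> ennreal (tau_deriv \<tau> x)"
  unfolding tau_slope_def tau_deriv_def by auto

lemma S0plus_dist_diff_le:
  assumes "dist x0 q \<le> R" "dist x0 q' \<le> R"
  shows "\<bar>\<tau> (dist y q) - \<tau> (dist y q')\<bar> \<le> 3 * (tau_slope \<tau> (dist y x0) + tau_slope \<tau> R) * dist q q'"
proof -
  have "\<bar>\<tau> (dist y q) - \<tau> (dist y q')\<bar> \<le> tau_slope \<tau> (max (dist y q) (dist y q')) * \<bar>dist y q - dist y q'\<bar>"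
    by (rule S0plus_abs_diff_le_slope) auto
  also have "\<dots> \<le> tau_slope \<tau> (dist y x0 + R) * dist q q'"
  proof (rule mult_mono)
    have "max (dist y q) (dist y q') \<le> dist y x0 + R"
      using assms by (smt (verit) dist_triangle)
    then show "tau_slope \<tau> (max (dist y q) (dist y q')) \<le> tau_slope \<tau> (dist y x0 + R)"
      by (rule monoD[OF mono_tau_slope])
    show "\<bar>dist y q - dist y q'\<bar> \<le> dist q q'"
      by (smt (verit) dist_commute dist_triangle)
  qed (auto simp: tau_slope_nonneg)
  also have "\<dots> \<le> 3 * (tau_slope \<tau> (dist y x0) + tau_slope \<tau> R) * dist q q'"
    using order_trans[OF zero_le_dist assms(1)]
    by (intro mult_right_mono tau_slope_add_le) auto
  finally show ?thesis .
qed

lemma S0plus_dist_diff_ge: "\<tau> (dist y q) - \<tau> (dist y x0) \<ge> - (tau_slope \<tau> (dist y x0) * dist x0 q)"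
proof (cases "dist y x0 \<le> dist y q")
  case True
  moreover have "0 \<le> tau_slope \<tau> (dist y x0) * dist x0 q" by (simp add: tau_slope_nonneg)
  ultimately show ?thesis using S0plus_mono[of "dist y x0" "dist y q"] by simp
next
  case False
  then have "\<tau> (dist y x0) - \<tau> (dist y q) \<le> tau_slope \<tau> (dist y x0) * (dist y x0 - dist y q)"
    by (intro S0plus_diff_le_slope) auto
  also have "\<dots> \<le> tau_slope \<tau> (dist y x0) * dist x0 q"
    by (intro mult_left_mono tau_slope_nonneg) (smt (verit) dist_commute dist_triangle)
  finally show ?thesis by simp
qed

end

section \<open>Midpoints and geodesics in Hadamard spaces\<close>

lemma hadamard_midpoint:
  assumes "hadamard TYPE('q::complete_space)"
  shows "\<exists>m::'q. dist a m = dist a b / 2 \<and> dist b m = dist a b / 2 \<and>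
    (\<forall>q. (dist q m)\<^sup>2 \<le> (1/2) * (dist a q)\<^sup>2 + (1/2) * (dist b q)\<^sup>2 - (1/4) * (dist a b)\<^sup>2)"
proof -
  obtain m :: 'q where m: "\<And>q. (dist q m)\<^sup>2 \<le> (1/2) * (dist a q)\<^sup>2 + (1/2) * (dist b q)\<^sup>2 - (1/4) * (dist a b)\<^sup>2"
    using assms unfolding hadamard_def by blast
  have "(dist a m)\<^sup>2 \<le> (dist a b / 2)\<^sup>2" "(dist b m)\<^sup>2 \<le> (dist a b / 2)\<^sup>2"
    using m[of a] m[of b] by (simp_all add: dist_commute power2_eq_square field_simps)
  then have "dist a m \<le> dist a b / 2" "dist b m \<le> dist a b / 2"
    by (auto elim: power2_le_imp_le)
  moreover have "dist a b \<le> dist a m + dist b m" by (metis dist_commute dist_triangle)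
  ultimately show ?thesis using m by (intro exI[of _ m]) auto
qed

text \<open>Midpoints are unique (the midpoint inequality at \<open>q = c\<close> gives \<open>dist c m = 0\<close>), so the
  inequality holds at every point halfway between \<open>a\<close> and \<open>b\<close>.\<close>
lemma hadamard_midpoint_CN:
  assumes "hadamard TYPE('q::complete_space)"
    and "dist a c = dist a b / 2" "dist b c = dist a b / 2"
  shows "(dist (q::'q) c)\<^sup>2 \<le> (1/2) * (dist a q)\<^sup>2 + (1/2) * (dist b q)\<^sup>2 - (1/4) * (dist a b)\<^sup>2"
proof -
  obtain m :: 'q where m: "\<And>q. (dist q m)\<^sup>2 \<le> (1/2) * (dist a q)\<^sup>2 + (1/2) * (dist b q)\<^sup>2 - (1/4) * (dist a b)\<^sup>2"
    using hadamard_midpoint[OF assms(1)] by blast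
  have "(dist c m)\<^sup>2 \<le> 0" using m[of c] assms(2,3) by (simp add: power2_eq_square field_simps)
  then show ?thesis using m by simp
qed

lemma hadamard_midpoint_dist_le:
  assumes "hadamard TYPE('q::complete_space)"
    and "dist a c = dist a b / 2" "dist b c = dist a b / 2"
  shows "dist (y::'q) c \<le> (dist y a + dist y b) / 2"
proof -
  have "(dist y a - dist y b)\<^sup>2 \<le> (dist a b)\<^sup>2"
    by (rule abs_le_square_iff[THEN iffD1]) (smt (verit) dist_commute dist_triangle)
  with hadamard_midpoint_CN[OF assms, of y]
  have "(dist y c)\<^sup>2 \<le> ((dist y a + dist y b) / 2)\<^sup>2"
    by (simp add: dist_commute power2_eq_square field_simps)
  then show ?thesis by (rule power2_le_imp_le) simp
qed

definition segment_point :: "'q::metric_space \<Rightarrow> 'q \<Rightarrow> real \<Rightarrow> 'q \<Rightarrow> bool" where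
  "segment_point a b t z \<longleftrightarrow> dist a z = t \<and> dist z b = dist a b - t"

lemma segment_point_param: "segment_point a b t z \<Longrightarrow> 0 \<le> t \<and> t \<le> dist a b"
  unfolding segment_point_def using zero_le_dist[of a z] zero_le_dist[of z b] by linarith

text \<open>Apply the midpoint inequality to the midpoint \<open>m\<close> of \<open>z\<close> and \<open>w\<close>, once from \<open>a\<close> and once
  from \<open>b\<close>: if \<open>dist z w > t - s\<close>, then \<open>dist a m + dist m b < dist a b\<close>.\<close>
lemma hadamard_segment_points:
  assumes had: "hadamard TYPE('q::complete_space)"
    and z: "segment_point a b t (z::'q)" and w: "segment_point a b s w" and "s \<le> t"
  shows "dist z w = t - s \<and> (\<exists>m. segment_point a b ((s+t)/2) m)"
proof -
  define D where "D = dist a b"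
  define e where "e = dist z w"
  have za: "dist a z = t" "dist z b = D - t" and wa: "dist a w = s" "dist w b = D - s"
    using z w unfolding segment_point_def D_def by auto
  have e_ge: "e \<ge> t - s" unfolding e_def using za wa by (smt (verit) dist_commute dist_triangle)
  obtain m where m: "\<And>q. (dist q m)\<^sup>2 \<le> (1/2) * (dist z q)\<^sup>2 + (1/2) * (dist w q)\<^sup>2 - (1/4) * e\<^sup>2"
    using hadamard_midpoint[OF had, of z w] unfolding e_def by blast
  define x where "x = dist a m"
  define y where "y = dist m b"
  have "x\<^sup>2 \<le> (1/2) * t\<^sup>2 + (1/2) * s\<^sup>2 - (1/4) * e\<^sup>2"
    using m[of a] za wa by (simp add: x_def dist_commute)
  moreover have "(1/2) * t\<^sup>2 + (1/2) * s\<^sup>2 = ((t+s)/2)\<^sup>2 + (1/4) * (t - s)\<^sup>2"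
    by (simp add: power2_eq_square field_simps)
  ultimately have x: "x\<^sup>2 \<le> ((t+s)/2)\<^sup>2 + (1/4) * (t - s)\<^sup>2 - (1/4) * e\<^sup>2" by linarith
  have "y\<^sup>2 \<le> (1/2) * (D - t)\<^sup>2 + (1/2) * (D - s)\<^sup>2 - (1/4) * e\<^sup>2"
    using m[of b] za wa by (simp add: y_def dist_commute)
  moreover have "(1/2) * (D - t)\<^sup>2 + (1/2) * (D - s)\<^sup>2 = (D - (t+s)/2)\<^sup>2 + (1/4) * (t - s)\<^sup>2"
    by (simp add: power2_eq_square field_simps)
  ultimately have y: "y\<^sup>2 \<le> (D - (t+s)/2)\<^sup>2 + (1/4) * (t - s)\<^sup>2 - (1/4) * e\<^sup>2" by linarith
  have xy: "D \<le> x + y" unfolding D_def x_def y_def by (rule dist_triangle)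
  have st: "0 \<le> s" "t \<le> D" using segment_point_param[OF z] segment_point_param[OF w] D_def by auto
  have "(t - s)\<^sup>2 \<le> e\<^sup>2" using e_ge \<open>s \<le> t\<close> by (intro power_mono) auto
  then have "x\<^sup>2 \<le> ((t+s)/2)\<^sup>2" "y\<^sup>2 \<le> (D - (t+s)/2)\<^sup>2" using x y by linarith+
  then have xle: "x \<le> (t+s)/2" and yle: "y \<le> D - (t+s)/2"
    using st \<open>s \<le> t\<close> power2_le_imp_le[of x "(t+s)/2"] power2_le_imp_le[of y "D - (t+s)/2"] by auto
  have "e = t - s"
  proof (rule ccontr)
    assume "e \<noteq> t - s"
    then have "(t - s)\<^sup>2 < e\<^sup>2" using e_ge \<open>s \<le> t\<close> by (intro power_strict_mono) auto
    then have "x\<^sup>2 < ((t+s)/2)\<^sup>2" "y\<^sup>2 < (D - (t+s)/2)\<^sup>2" using x y by linarith+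
    then have "x < (t+s)/2" "y < D - (t+s)/2"
      using st \<open>s \<le> t\<close> power2_less_imp_less[of x "(t+s)/2"] power2_less_imp_less[of y "D - (t+s)/2"]
      by auto
    then show False using xy by linarith
  qed
  moreover have "x = (s+t)/2" using xle yle xy by argo
  moreover have "y = D - (s+t)/2" using xle yle xy by argo
  ultimately show ?thesis unfolding segment_point_def x_def y_def D_def e_def by auto
qed

lemma hadamard_segment_points_dist:
  assumes "hadamard TYPE('q::complete_space)"
    and "segment_point a b t (z::'q)" "segment_point a b s w"
  shows "dist z w = \<bar>t - s\<bar>"
  using hadamard_segment_points[OF assms] hadamard_segment_points[OF assms(1,3,2)]
  by (cases "s \<le> t") (auto simp: dist_commute)

lemma closed_segment_params:
  assumes "hadamard TYPE('q::complete_space)"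
  shows "closed {t. \<exists>z::'q. segment_point a b t z}"
  unfolding closed_sequential_limits
proof (intro allI impI, elim conjE)
  fix x l assume "\<forall>n. x n \<in> {t. \<exists>z. segment_point a b t z}" and xl: "x \<longlonglongrightarrow> l"
  then have "\<forall>n. \<exists>z. segment_point a b (x n) z" by simp
  then obtain zs where zs: "\<And>n. segment_point a b (x n) (zs n)" by (metis choice)
  have "Cauchy zs"
  proof (rule metric_CauchyI)
    fix e :: real assume "e > 0"
    then obtain M where M: "\<And>m n. m \<ge> M \<Longrightarrow> n \<ge> M \<Longrightarrow> dist (x m) (x n) < e"
      using metric_CauchyD[OF LIMSEQ_imp_Cauchy[OF xl]] by blast
    have "dist (zs m) (zs n) < e" if "m \<ge> M" "n \<ge> M" for m n
      using M[OF that] hadamard_segment_points_dist[OF assms zs[of m] zs[of n]]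
      by (simp add: dist_real_def)
    then show "\<exists>M. \<forall>m\<ge>M. \<forall>n\<ge>M. dist (zs m) (zs n) < e" by blast
  qed
  then obtain z where zl: "zs \<longlonglongrightarrow> z" using Cauchy_convergent_iff convergent_def by blast
  have "(\<lambda>n. dist a (zs n)) \<longlonglongrightarrow> dist a z" "(\<lambda>n. dist (zs n) b) \<longlonglongrightarrow> dist z b"
    using tendsto_dist[OF tendsto_const zl] tendsto_dist[OF zl tendsto_const] by auto
  moreover have "(\<lambda>n. dist a (zs n)) \<longlonglongrightarrow> l" "(\<lambda>n. dist (zs n) b) \<longlonglongrightarrow> dist a b - l"
    using xl tendsto_diff[OF tendsto_const xl, of "dist a b"] zs unfolding segment_point_def by simp_all
  ultimately have "dist a z = l" "dist z b = dist a b - l" using LIMSEQ_unique by blast+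
  then show "l \<in> {t. \<exists>z. segment_point a b t z}" unfolding segment_point_def by blast
qed

lemma closed_midpoint_closed_contains_interval:
  fixes T :: "real set"
  assumes "closed T" "a \<in> T" "b \<in> T"
    and mid: "\<And>s t. s \<in> T \<Longrightarrow> t \<in> T \<Longrightarrow> s \<le> t \<Longrightarrow> (s+t)/2 \<in> T"
    and t: "a \<le> t" "t \<le> b"
  shows "t \<in> T"
proof (rule ccontr)
  assume tT: "t \<notin> T"
  define L where "L = T \<inter> {..t}"
  define R where "R = T \<inter> {t..}"
  have "L \<noteq> {}" "bdd_above L" "closed L" "R \<noteq> {}" "bdd_below R" "closed R"
    using assms unfolding L_def R_def by auto
  then have "Sup L \<in> L" "Inf R \<in> R" by (auto intro: closed_contains_Sup closed_contains_Inf)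
  then have "Sup L \<in> T" "Inf R \<in> T" "Sup L < t" "t < Inf R"
    using tT unfolding L_def R_def by (auto simp: order.order_iff_strict)
  then have "(Sup L + Inf R)/2 \<in> T" using mid by simp
  then have "(Sup L + Inf R)/2 \<in> L \<or> (Sup L + Inf R)/2 \<in> R" unfolding L_def R_def by auto
  moreover have "x \<le> Sup L" if "x \<in> L" for x
    using that unfolding L_def by (intro cSup_upper) auto
  moreover have "Inf R \<le> x" if "x \<in> R" for x
    using that unfolding R_def by (intro cInf_lower) auto
  ultimately show False using \<open>Sup L < t\<close> \<open>t < Inf R\<close> by force
qed

text \<open>Geodesics are assembled pointwise: the admissible parameters form a closed (by completeness)
  and midpoint-closed subset of \<open>[0, dist a b]\<close> containing both ends.\<close>
lemma hadamard_segment_point_exists: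
  assumes "hadamard TYPE('q::complete_space)" "0 \<le> t" "t \<le> dist a b"
  shows "\<exists>z::'q. segment_point a b t z"
proof -
  define T where "T = {t. \<exists>z::'q. segment_point a b t z}"
  have "segment_point a b 0 a" "segment_point a b (dist a b) b"
    unfolding segment_point_def by auto
  then have ends: "0 \<in> T" "dist a b \<in> T" unfolding T_def by blast+
  have mid: "(s+t)/2 \<in> T" if st: "s \<in> T" "t \<in> T" "s \<le> t" for s t
  proof -
    obtain z w where "segment_point a b t z" "segment_point a b s w" using st unfolding T_def by blast
    from conjunct2[OF hadamard_segment_points[OF assms(1) this \<open>s \<le> t\<close>]] show ?thesis
      unfolding T_def by simp
  qed
  have "t \<in> T"
    by (rule closed_midpoint_closed_contains_interval[OF _ ends mid])
      (use closed_segment_params[OF assms(1)] assms(2,3) in \<open>simp_all add: T_def\<close>)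
  then show ?thesis unfolding T_def by simp
qed

lemma hadamard_geodesic_exists:
  assumes "hadamard TYPE('q::complete_space)"
  shows "\<exists>\<gamma>. geodesic_between (a::'q) b \<gamma>"
proof -
  define \<gamma> where "\<gamma> t = (SOME z. segment_point a b t z)" for t
  have \<gamma>: "segment_point a b t (\<gamma> t)" if "t \<in> {0..dist a b}" for t
  proof -
    have "\<exists>z. segment_point a b t z" using hadamard_segment_point_exists[OF assms, of t a b] that by simp
    then show ?thesis unfolding \<gamma>_def by (rule someI_ex)
  qed
  have "segment_point a b 0 (\<gamma> 0)" "segment_point a b (dist a b) (\<gamma> (dist a b))"
    by (simp_all add: \<gamma>)
  then have "\<gamma> 0 = a" "\<gamma> (dist a b) = b"
    unfolding segment_point_def by (metis diff_self dist_eq_0_iff dist_commute)+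
  moreover have "dist (\<gamma> s) (\<gamma> t) = \<bar>s - t\<bar>" if "s \<in> {0..dist a b}" "t \<in> {0..dist a b}" for s t
    by (rule hadamard_segment_points_dist[OF assms \<gamma>[OF that(1)] \<gamma>[OF that(2)]])
  ultimately have "geodesic_between a b \<gamma>" unfolding geodesic_between_def by simp
  then show ?thesis by blast
qed

lemma geodesic_between_dist:
  "geodesic_between q p \<gamma> \<Longrightarrow> s \<in> {0..dist q p} \<Longrightarrow> t \<in> {0..dist q p} \<Longrightarrow> dist (\<gamma> s) (\<gamma> t) = \<bar>s - t\<bar>"
  unfolding geodesic_between_def by blast

lemma geodesic_between_midpoint:
  assumes "geodesic_between q p \<gamma>" "s \<in> {0..dist q p}" "u \<in> {0..dist q p}"
  shows "dist (\<gamma> s) (\<gamma> ((s+u)/2)) = dist (\<gamma> s) (\<gamma> u) / 2"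
    "dist (\<gamma> u) (\<gamma> ((s+u)/2)) = dist (\<gamma> s) (\<gamma> u) / 2"
proof -
  have "(s+u)/2 \<in> {0..dist q p}" using assms by auto
  then show "dist (\<gamma> s) (\<gamma> ((s+u)/2)) = dist (\<gamma> s) (\<gamma> u) / 2"
    "dist (\<gamma> u) (\<gamma> ((s+u)/2)) = dist (\<gamma> s) (\<gamma> u) / 2"
    using assms geodesic_between_dist[OF assms(1)] by (simp_all add: abs_if field_simps)
qed

lemma continuous_on_geodesic_between:
  assumes "geodesic_between q p \<gamma>"
  shows "continuous_on {0..dist q p} \<gamma>"
proof (rule lipschitz_on_continuous_on)
  show "1-lipschitz_on {0..dist q p} \<gamma>"
    by (rule lipschitz_onI) (simp_all add: geodesic_between_dist[OF assms] dist_real_def)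
qed

lemma geod_convex_set_midpoint:
  assumes "hadamard TYPE('q::complete_space)" "geod_convex_set C" "(a::'q) \<in> C" "b \<in> C"
  shows "\<exists>c\<in>C. dist a c = dist a b / 2 \<and> dist b c = dist a b / 2"
proof (cases "a = b")
  case False
  obtain \<gamma> where \<gamma>: "geodesic_between a b \<gamma>" using hadamard_geodesic_exists[OF assms(1)] by blast
  then have "\<gamma> ` {0..dist a b} \<subseteq> C" using assms False unfolding geod_convex_set_def by blast
  then have "\<gamma> (dist a b / 2) \<in> C" by auto
  moreover have "\<gamma> 0 = a" "\<gamma> (dist a b) = b" using \<gamma> unfolding geodesic_between_def by auto
  ultimately show ?thesis using geodesic_between_midpoint[OF \<gamma>, of 0 "dist a b"] by auto
qed (use assms in auto)

section \<open>Midpoint convexity\<close>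

lemma midpoint_convex_le_zero:
  fixes g :: "real \<Rightarrow> real"
  assumes cont: "continuous_on {x..y} g" and ends: "g x = 0" "g y = 0"
    and mid: "\<And>u v. u \<in> {x..y} \<Longrightarrow> v \<in> {x..y} \<Longrightarrow> g ((u+v)/2) \<le> (g u + g v)/2"
    and s: "s \<in> {x..y}"
  shows "g s \<le> 0"
proof (rule ccontr)
  assume "\<not> g s \<le> 0"
  obtain s0 where s0: "s0 \<in> {x..y}" and max: "\<And>u. u \<in> {x..y} \<Longrightarrow> g u \<le> g s0"
    using continuous_attains_sup[OF compact_Icc _ cont] s by auto
  define M where "M = g s0"
  have "M > 0" using max[OF s] \<open>\<not> g s \<le> 0\<close> unfolding M_def by simp
  text \<open>The leftmost maximiser \<open>t0\<close> is an interior point where the midpoint inequality fails.\<close>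
  define K where "K = {u \<in> {x..y}. g u = M}"
  have "closed K" unfolding K_def by (rule continuous_closed_preimage_constant[OF cont]) simp
  moreover have "K \<noteq> {}" "bdd_below K" using s0 unfolding K_def M_def by auto
  ultimately have "Inf K \<in> K" by (intro closed_contains_Inf)
  define t0 where "t0 = Inf K"
  have t0: "x < t0" "t0 < y" "g t0 = M"
    using \<open>Inf K \<in> K\<close> \<open>M > 0\<close> ends unfolding K_def t0_def by (auto simp: order.order_iff_strict)
  define h where "h = min (t0 - x) (y - t0)"
  have h: "h > 0" "t0 - h \<in> {x..y}" "t0 + h \<in> {x..y}" using t0 by (auto simp: h_def)
  have "t0 - h \<notin> K"
  proof
    assume "t0 - h \<in> K"
    then have "t0 \<le> t0 - h" unfolding t0_def using \<open>bdd_below K\<close> by (rule cInf_lower)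
    then show False using h by simp
  qed
  then have "g (t0 - h) < M" using max[OF h(2)] h(2) unfolding K_def M_def by auto
  moreover have "g (t0 + h) \<le> M" using max[OF h(3)] unfolding M_def .
  moreover have "g t0 \<le> (g (t0 - h) + g (t0 + h))/2" using mid[OF h(2,3)] by simp
  ultimately show False using t0 by simp
qed

lemma midpoint_convex_imp_convex_on:
  fixes f :: "real \<Rightarrow> real"
  assumes cont: "continuous_on {a..b} f"
    and mid: "\<And>x y. x \<in> {a..b} \<Longrightarrow> y \<in> {a..b} \<Longrightarrow> f ((x+y)/2) \<le> (f x + f y)/2"
  shows "convex_on {a..b} f"
proof (rule convex_on_linorderI)
  fix t x y :: real assume t: "0 < t" "t < 1" and xy: "x \<in> {a..b}" "y \<in> {a..b}" "x < y"
  define c where "c = (f y - f x) / (y - x)"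
  define g where "g s = f s - f x - (s - x) * c" for s
  have sub: "{x..y} \<subseteq> {a..b}" using xy by auto
  have "(1 - t) *\<^sub>R x + t *\<^sub>R y = x + t * (y - x)" by (simp add: algebra_simps)
  moreover have "t * (y - x) \<le> y - x" using t xy by (intro mult_left_le_one_le) auto
  ultimately have s: "(1 - t) *\<^sub>R x + t *\<^sub>R y \<in> {x..y}"
    using t xy mult_nonneg_nonneg[of t "y - x"] unfolding atLeastAtMost_iff by linarith
  have "continuous_on {x..y} g" unfolding g_def
    by (intro continuous_intros continuous_on_subset[OF cont sub])
  moreover have "g x = 0" "g y = 0" unfolding g_def c_def using xy by auto
  moreover have "g ((u+v)/2) \<le> (g u + g v)/2" if "u \<in> {x..y}" "v \<in> {x..y}" for u v
  proof -
    have "((u+v)/2 - x) * c = ((u - x) * c + (v - x) * c)/2" by (simp add: algebra_simps)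
    then show ?thesis using mid[of u v] that sub unfolding g_def by auto
  qed
  ultimately have "g ((1 - t) *\<^sub>R x + t *\<^sub>R y) \<le> 0" using s by (rule midpoint_convex_le_zero)
  moreover have "((1 - t) *\<^sub>R x + t *\<^sub>R y - x) * c = t * (f y - f x)"
    unfolding c_def using xy by (simp add: field_simps)
  ultimately show "f ((1 - t) *\<^sub>R x + t *\<^sub>R y) \<le> (1 - t) * f x + t * f y"
    unfolding g_def by (simp add: algebra_simps)
qed simp

section \<open>Minimising sequences and projections\<close>

lemma infdist_attains_approx:
  assumes "A \<noteq> {}" "e > 0"
  shows "\<exists>a\<in>A. dist x a < infdist x A + e"
  using assms cInf_less_iff[of "dist x ` A" "infdist x A + e"] by (auto simp: infdist_notempty)

lemma exists_infdist_minimizing_seq: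
  assumes "\<And>n. S n \<noteq> {}"
  shows "\<exists>p. \<forall>n. p n \<in> S n \<and> dist x (p n) \<le> infdist x (S n) + inverse (real (Suc n))"
proof -
  have "\<exists>z. z \<in> S n \<and> dist x z \<le> infdist x (S n) + inverse (real (Suc n))" for n
    using infdist_attains_approx[of "S n" "inverse (real (Suc n))" x] assms by (auto intro: less_imp_le)
  then have "\<forall>n. \<exists>z. z \<in> S n \<and> dist x z \<le> infdist x (S n) + inverse (real (Suc n))" by blast
  then show ?thesis by (rule choice)
qed

text \<open>If \<open>c\<close> is the midpoint of \<open>p n\<close> and \<open>p m\<close> (\<open>n \<le> m\<close>), the midpoint inequality at \<open>x\<close> gives
  \<open>dist (p n) (p m)\<^sup>2 \<le> 4 ((L + \<epsilon>\<^sub>n)\<^sup>2 - r\<^sub>n\<^sup>2)\<close> with \<open>r\<^sub>n = infdist x (S n) \<nearrow> L\<close>.\<close>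
lemma hadamard_minimizing_seq_Cauchy:
  fixes S :: "nat \<Rightarrow> 'q::complete_space set" and x :: 'q
  assumes had: "hadamard TYPE('q)" and "decseq S"
    and mid: "\<And>n a b. a \<in> S n \<Longrightarrow> b \<in> S n \<Longrightarrow> \<exists>c\<in>S n. dist a c = dist a b / 2 \<and> dist b c = dist a b / 2"
    and bnd: "\<And>n. infdist x (S n) \<le> B"
    and p: "\<And>n. p n \<in> S n" "\<And>n. dist x (p n) \<le> infdist x (S n) + inverse (real (Suc n))"
  shows "Cauchy p"
proof -
  define r where "r n = infdist x (S n)" for n
  define e where "e n = inverse (real (Suc n))" for n
  have sub: "S m \<subseteq> S n" if "n \<le> m" for n m using \<open>decseq S\<close> that by (simp add: decseq_def)
  have "incseq r" unfolding incseq_def r_def using sub p(1) by (blast intro: infdist_mono)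
  then obtain L where L: "r \<longlonglongrightarrow> L" "\<And>n. r n \<le> L"
    using incseq_convergent[of r B] bnd unfolding r_def by blast
  have key: "(dist (p n) (p m))\<^sup>2 \<le> 4 * (L + e n)\<^sup>2 - 4 * (r n)\<^sup>2" if nm: "n \<le> m" for n m
  proof -
    obtain c where c: "c \<in> S n" "dist (p n) c = dist (p n) (p m) / 2" "dist (p m) c = dist (p n) (p m) / 2"
      using mid[OF p(1)[of n]] p(1)[of m] sub[OF nm] by blast
    have "(r n)\<^sup>2 \<le> (dist x c)\<^sup>2" using infdist_le[OF c(1)] infdist_nonneg unfolding r_def
      by (intro power_mono) auto
    moreover have "e m \<le> e n" unfolding e_def using nm by (auto simp: field_simps)
    then have "dist x (p i) \<le> L + e n" if "i \<in> {n, m}" for i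
      using p(2)[of i] L(2)[of i] that unfolding r_def[symmetric] e_def[symmetric] by auto
    then have "(dist (p i) x)\<^sup>2 \<le> (L + e n)\<^sup>2" if "i \<in> {n, m}" for i
      using that by (intro power_mono) (auto simp: dist_commute)
    then have "(dist (p n) x)\<^sup>2 \<le> (L + e n)\<^sup>2" "(dist (p m) x)\<^sup>2 \<le> (L + e n)\<^sup>2" by auto
    ultimately show ?thesis using hadamard_midpoint_CN[OF had c(2,3), of x] by linarith
  qed
  have "e \<longlonglongrightarrow> 0" unfolding e_def by (rule LIMSEQ_inverse_real_of_nat)
  then have "(\<lambda>n. 4 * (L + e n)\<^sup>2 - 4 * (r n)\<^sup>2) \<longlonglongrightarrow> 4 * (L + 0)\<^sup>2 - 4 * L\<^sup>2"
    by (intro tendsto_intros L(1))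
  then have bound0: "(\<lambda>n. 4 * (L + e n)\<^sup>2 - 4 * (r n)\<^sup>2) \<longlonglongrightarrow> 0" by simp
  show "Cauchy p"
  proof (rule metric_CauchyI)
    fix \<epsilon> :: real assume "\<epsilon> > 0"
    then obtain N where N: "\<And>n. n \<ge> N \<Longrightarrow> 4 * (L + e n)\<^sup>2 - 4 * (r n)\<^sup>2 < \<epsilon>\<^sup>2"
      using order_tendstoD(2)[OF bound0, of "\<epsilon>\<^sup>2"] unfolding eventually_sequentially by auto
    have "(dist (p m) (p n))\<^sup>2 < \<epsilon>\<^sup>2" if "m \<ge> N" "n \<ge> N" for m n
      using key[of m n] key[of n m] N[OF that(1)] N[OF that(2)] by (cases "m \<le> n") (auto simp: dist_commute)
    then show "\<exists>M. \<forall>m\<ge>M. \<forall>n\<ge>M. dist (p m) (p n) < \<epsilon>"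
      using \<open>\<epsilon> > 0\<close> by (meson less_imp_le power2_less_imp_less)
  qed
qed

lemma hadamard_dist_sq_geodesic_convex:
  assumes had: "hadamard TYPE('q::complete_space)" and g: "geodesic_between a b \<gamma>"
  shows "convex_on {0..dist a b} (\<lambda>t. (dist (q::'q) (\<gamma> t))\<^sup>2 - t\<^sup>2)"
proof (rule midpoint_convex_imp_convex_on)
  show "continuous_on {0..dist a b} (\<lambda>t. (dist q (\<gamma> t))\<^sup>2 - t\<^sup>2)"
    by (intro continuous_intros continuous_on_compose2[OF continuous_on_dist[OF continuous_on_const continuous_on_id]]
        continuous_on_geodesic_between[OF g]) auto
  fix s u assume su: "s \<in> {0..dist a b}" "u \<in> {0..dist a b}"
  have "(dist q (\<gamma> ((s+u)/2)))\<^sup>2 \<le> (1/2) * (dist (\<gamma> s) q)\<^sup>2 + (1/2) * (dist (\<gamma> u) q)\<^sup>2 - (1/4) * (dist (\<gamma> s) (\<gamma> u))\<^sup>2"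
    by (rule hadamard_midpoint_CN[OF had geodesic_between_midpoint[OF g su]])
  moreover have "(dist (\<gamma> s) (\<gamma> u))\<^sup>2 = (s - u)\<^sup>2" using geodesic_between_dist[OF g su] by simp
  moreover have "(1/4) * (s - u)\<^sup>2 + ((s+u)/2)\<^sup>2 = (1/2) * s\<^sup>2 + (1/2) * u\<^sup>2"
    by (simp add: power2_eq_square field_simps)
  ultimately show "(dist q (\<gamma> ((s+u)/2)))\<^sup>2 - ((s+u)/2)\<^sup>2
      \<le> ((dist q (\<gamma> s))\<^sup>2 - s\<^sup>2 + ((dist q (\<gamma> u))\<^sup>2 - u\<^sup>2)) / 2"
    by (simp add: dist_commute)
qed

lemma hadamard_nearest_point_exists:
  assumes had: "hadamard TYPE('q::complete_space)"
    and C: "closed C" "geod_convex_set C" "C \<noteq> {}"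
  shows "\<exists>\<pi>\<in>C. dist (q::'q) \<pi> = infdist q C"
proof -
  obtain p where p: "\<And>n. p n \<in> C" "\<And>n. dist q (p n) \<le> infdist q C + inverse (real (Suc n))"
    using exists_infdist_minimizing_seq[of "\<lambda>_. C" q] C(3) by blast
  have "Cauchy p"
    by (rule hadamard_minimizing_seq_Cauchy[of "\<lambda>_. C" q "infdist q C"])
      (use had geod_convex_set_midpoint[OF had C(2)] p in \<open>auto simp: decseq_def\<close>)
  then obtain \<pi> where \<pi>: "p \<longlonglongrightarrow> \<pi>" using Cauchy_convergent_iff convergent_def by blast
  have "\<pi> \<in> C" using C(1) p(1) \<pi> closed_sequentially by blast
  moreover have "dist q \<pi> \<le> infdist q C"
  proof (rule LIMSEQ_le)
    show "(\<lambda>n. dist q (p n)) \<longlonglongrightarrow> dist q \<pi>" by (intro tendsto_dist tendsto_const \<pi>)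
    show "(\<lambda>n. infdist q C + inverse (real (Suc n))) \<longlonglongrightarrow> infdist q C"
      by (rule LIMSEQ_inverse_real_of_nat_add)
  qed (use p(2) in blast)
  ultimately show ?thesis using infdist_le[of \<pi> C q] by force
qed

text \<open>Along the geodesic from the nearest point \<open>\<pi>\<close> to \<open>y\<close>, strong convexity of
  \<open>t \<mapsto> dist q (\<gamma> t)\<^sup>2 - t\<^sup>2\<close> and minimality of \<open>\<pi>\<close> give
  \<open>dist y \<pi>\<^sup>2 + dist q \<pi>\<^sup>2 \<le> dist y q\<^sup>2\<close>; the contradiction below uses the step
  \<open>\<lambda> = \<delta>\<^sup>2 / (2 D\<^sup>2)\<close>.\<close>
lemma hadamard_nearest_point_closer:
  assumes had: "hadamard TYPE('q::complete_space)" and C: "geod_convex_set C"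
    and \<pi>: "\<pi> \<in> C" "dist (q::'q) \<pi> = infdist q C" and "q \<notin> C" and y: "y \<in> C"
  shows "dist y \<pi> < dist y q"
proof (rule ccontr)
  assume "\<not> dist y \<pi> < dist y q"
  define \<delta> where "\<delta> = infdist q C"
  define D where "D = dist \<pi> y"
  have "q \<noteq> \<pi>" using \<pi> \<open>q \<notin> C\<close> by auto
  then have \<delta>: "\<delta> > 0" using \<pi>(2) unfolding \<delta>_def by (metis zero_less_dist_iff)
  have yq: "dist q y \<le> D" using \<open>\<not> dist y \<pi> < dist y q\<close> unfolding D_def by (simp add: dist_commute)
  have "\<delta> \<le> dist q y" unfolding \<delta>_def by (rule infdist_le[OF y])
  then have "\<delta> \<le> D" using yq by simp
  then have "\<pi> \<noteq> y" "D > 0" using \<delta> unfolding D_def by auto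
  obtain \<gamma> where g: "geodesic_between \<pi> y \<gamma>" using hadamard_geodesic_exists[OF had] by blast
  have gC: "\<gamma> ` {0..D} \<subseteq> C" unfolding D_def
    using C \<pi>(1) y \<open>\<pi> \<noteq> y\<close> g unfolding geod_convex_set_def by blast
  have g0: "\<gamma> 0 = \<pi>" "\<gamma> D = y" using g unfolding geodesic_between_def D_def by auto
  define lam where "lam = \<delta>\<^sup>2 / (2 * D\<^sup>2)"
  have "\<delta>\<^sup>2 \<le> D\<^sup>2" using \<open>\<delta> \<le> D\<close> \<delta> by (intro power_mono) auto
  then have "\<delta>\<^sup>2 \<le> 2 * D\<^sup>2" using zero_le_power2[of D] by linarith
  then have lam: "0 < lam" "lam \<le> 1" unfolding lam_def using \<delta> \<open>D > 0\<close> by (auto simp: divide_le_eq)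
  have "(dist q (\<gamma> ((1 - lam) *\<^sub>R 0 + lam *\<^sub>R D)))\<^sup>2 - ((1 - lam) *\<^sub>R 0 + lam *\<^sub>R D)\<^sup>2
      \<le> (1 - lam) * ((dist q (\<gamma> 0))\<^sup>2 - 0\<^sup>2) + lam * ((dist q (\<gamma> D))\<^sup>2 - D\<^sup>2)"
    using convex_onD[OF hadamard_dist_sq_geodesic_convex[OF had g, of q], of lam 0 D] lam \<open>D > 0\<close>
    unfolding D_def by auto
  then have ineq: "(dist q (\<gamma> (lam * D)))\<^sup>2 - (lam * D)\<^sup>2 \<le> (1 - lam) * \<delta>\<^sup>2 + lam * ((dist q y)\<^sup>2 - D\<^sup>2)"
    using g0 \<pi>(2) unfolding \<delta>_def by simp
  have "lam * D \<in> {0..D}" using lam \<open>D > 0\<close> by (auto simp: mult_le_cancel_right1)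
  then have "\<delta> \<le> dist q (\<gamma> (lam * D))" unfolding \<delta>_def using gC by (intro infdist_le) auto
  then have "\<delta>\<^sup>2 \<le> (dist q (\<gamma> (lam * D)))\<^sup>2" using \<delta> by (intro power_mono) auto
  moreover have "(dist q y)\<^sup>2 \<le> D\<^sup>2" using yq by (intro power_mono) auto
  then have "lam * ((dist q y)\<^sup>2 - D\<^sup>2) \<le> 0" using lam by (intro mult_nonneg_nonpos) auto
  ultimately have "lam * \<delta>\<^sup>2 \<le> lam * (lam * D\<^sup>2)"
    using ineq by (simp add: power2_eq_square algebra_simps)
  then have "\<delta>\<^sup>2 \<le> lam * D\<^sup>2" using lam by simp
  also have "lam * D\<^sup>2 = \<delta>\<^sup>2 / 2" unfolding lam_def using \<open>D > 0\<close> by (simp add: field_simps)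
  finally show False using \<delta> by simp
qed

lemma hadamard_projection_closer:
  assumes "hadamard TYPE('q::complete_space)" "closed C" "geod_convex_set C" "C \<noteq> {}" "(q::'q) \<notin> C"
  shows "\<exists>\<pi>\<in>C. \<forall>y\<in>C. dist y \<pi> < dist y q"
  using hadamard_nearest_point_exists[OF assms(1-4), of q] hadamard_nearest_point_closer[OF assms(1,3) _ _ assms(5)]
  by blast

section \<open>The variance functional\<close>

lemma (in prob_space) exists_radius_small_tail:
  fixes H d :: "'a \<Rightarrow> real"
  assumes H: "integrable M H" "\<And>\<omega>. H \<omega> \<ge> 0" and d: "d \<in> borel_measurable M" and "c > 0"
  shows "\<exists>\<rho>::nat. (\<integral>\<omega>. H \<omega> * (if d \<omega> > \<rho> then 1 else 0) \<partial>M) < c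
    \<and> 1/2 < (\<integral>\<omega>. (if d \<omega> \<le> \<rho> then 1 else 0 :: real) \<partial>M)"
proof -
  have ev: "\<forall>\<^sub>F n in sequentially. d \<omega> \<le> real n" for \<omega>
  proof -
    obtain N :: nat where "d \<omega> \<le> real N" using real_arch_simple by blast
    then have "\<forall>n\<ge>N. d \<omega> \<le> real n" by (auto intro: order_trans)
    then show ?thesis unfolding eventually_sequentially by blast
  qed
  have "(\<lambda>n. \<integral>\<omega>. H \<omega> * (if d \<omega> > real n then 1 else 0) \<partial>M) \<longlonglongrightarrow> (\<integral>\<omega>. 0 \<partial>M)"
  proof (rule integral_dominated_convergence[where w = H])
    show "AE \<omega> in M. (\<lambda>n. H \<omega> * (if d \<omega> > real n then 1 else 0)) \<longlonglongrightarrow> 0"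
    proof (intro AE_I2 tendsto_eventually)
      fix \<omega> show "\<forall>\<^sub>F n in sequentially. H \<omega> * (if d \<omega> > real n then 1 else 0) = 0"
        using ev[of \<omega>] by eventually_elim simp
    qed
  qed (use H d in auto)
  then have "\<forall>\<^sub>F n in sequentially. (\<integral>\<omega>. H \<omega> * (if d \<omega> > real n then 1 else 0) \<partial>M) < c"
    using \<open>c > 0\<close> by (auto intro: order_tendstoD(2))
  moreover have "(\<lambda>n. \<integral>\<omega>. (if d \<omega> \<le> real n then 1 else 0 :: real) \<partial>M) \<longlonglongrightarrow> (\<integral>\<omega>. 1 \<partial>M)"
  proof (rule integral_dominated_convergence[where w = "\<lambda>_. 1::real"])
    show "AE \<omega> in M. (\<lambda>n. if d \<omega> \<le> real n then 1 else 0 :: real) \<longlonglongrightarrow> 1"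
    proof (intro AE_I2 tendsto_eventually)
      fix \<omega> show "\<forall>\<^sub>F n in sequentially. (if d \<omega> \<le> real n then 1 else 0) = (1::real)"
        using ev[of \<omega>] by eventually_elim simp
    qed
  qed (use d in auto)
  then have "\<forall>\<^sub>F n in sequentially. 1/2 < (\<integral>\<omega>. (if d \<omega> \<le> real n then 1 else 0 :: real) \<partial>M)"
    by (rule order_tendstoD(1)) (simp add: prob_space)
  ultimately have "\<forall>\<^sub>F n in sequentially. (\<integral>\<omega>. H \<omega> * (if d \<omega> > real n then 1 else 0) \<partial>M) < c
      \<and> 1/2 < (\<integral>\<omega>. (if d \<omega> \<le> real n then 1 else 0 :: real) \<partial>M)"
    by (rule eventually_conj)
  then show ?thesis unfolding eventually_sequentially by blast
qed

locale hadamard_frechet = prob_space P for P :: "'w measure" +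
  fixes Y :: "'w \<Rightarrow> 'q::complete_space" and x0 :: 'q and \<tau> :: "real \<Rightarrow> real"
  assumes hadamard: "hadamard TYPE('q)"
    and measurable_Y: "Y \<in> measurable P borel"
    and \<tau>: "\<tau> \<in> S0plus"
    and moment: "(\<integral>\<^sup>+ \<omega>. ennreal (tau_deriv \<tau> (dist (Y \<omega>) x0)) \<partial>P) < \<infinity>"
begin

abbreviation v :: "'q \<Rightarrow> real" where "v \<equiv> var_fun P Y \<tau> x0"

definition slope_Y :: "'w \<Rightarrow> real" where "slope_Y \<omega> = tau_slope \<tau> (dist (Y \<omega>) x0)"

lemma measurable_dist_Y[measurable]: "(\<lambda>\<omega>. dist (Y \<omega>) q) \<in> borel_measurable P"
  using measurable_Y by (rule measurable_compose)
    (intro borel_measurable_continuous_onI continuous_intros)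

lemma measurable_tau_dist_Y[measurable]: "(\<lambda>\<omega>. \<tau> (dist (Y \<omega>) q)) \<in> borel_measurable P"
  using measurable_compose[OF measurable_dist_Y borel_measurable_S0plus_max[OF \<tau>]] by simp

lemma measurable_slope_Y[measurable]: "slope_Y \<in> borel_measurable P"
  unfolding slope_Y_def
  using measurable_compose[OF measurable_dist_Y borel_measurable_mono[OF mono_tau_slope[OF \<tau>]]] .

lemma slope_Y_nonneg: "slope_Y \<omega> \<ge> 0"
  unfolding slope_Y_def by (rule tau_slope_nonneg[OF \<tau>])

lemma integrable_slope_Y: "integrable P slope_Y"
proof (rule integrableI_nonneg)
  have "(\<integral>\<^sup>+ \<omega>. ennreal (slope_Y \<omega>) \<partial>P) \<le> (\<integral>\<^sup>+ \<omega>. ennreal (tau_deriv \<tau> (dist (Y \<omega>) x0)) \<partial>P)"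
    unfolding slope_Y_def by (intro nn_integral_mono tau_slope_le_tau_deriv[OF \<tau>]) simp
  then show "(\<integral>\<^sup>+ \<omega>. ennreal (slope_Y \<omega>) \<partial>P) < \<infinity>" using moment by (rule le_less_trans)
qed (auto simp: slope_Y_nonneg)

lemma integrable_tau_dist_diff: "integrable P (\<lambda>\<omega>. \<tau> (dist (Y \<omega>) q) - \<tau> (dist (Y \<omega>) q'))"
proof (rule Bochner_Integration.integrable_bound)
  define R where "R = max (dist x0 q) (dist x0 q')"
  show "integrable P (\<lambda>\<omega>. 3 * (slope_Y \<omega> + tau_slope \<tau> R) * dist q q')"
    using integrable_slope_Y by simp
  show "AE \<omega> in P. norm (\<tau> (dist (Y \<omega>) q) - \<tau> (dist (Y \<omega>) q'))
      \<le> norm (3 * (slope_Y \<omega> + tau_slope \<tau> R) * dist q q')"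
    using S0plus_dist_diff_le[OF \<tau>, of x0 q R q'] slope_Y_nonneg tau_slope_nonneg[OF \<tau>, of R]
    by (intro AE_I2) (simp add: R_def slope_Y_def)
qed simp

lemma var_fun_diff: "v q - v q' = (\<integral>\<omega>. \<tau> (dist (Y \<omega>) q) - \<tau> (dist (Y \<omega>) q') \<partial>P)"
  unfolding var_fun_def
  using Bochner_Integration.integral_diff[OF integrable_tau_dist_diff[of q x0] integrable_tau_dist_diff[of q' x0]]
  by simp

lemma var_fun_base: "v x0 = 0"
  unfolding var_fun_def by simp

lemma var_fun_change_base: "var_fun P Y \<tau> x1 q = v q - v x1"
  unfolding var_fun_diff by (simp add: var_fun_def)

lemma var_fun_lipschitz_on_cball:
  "(3 * (expectation slope_Y + tau_slope \<tau> R))-lipschitz_on (cball x0 R) v"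
proof (rule lipschitz_onI)
  fix q q' assume "q \<in> cball x0 R" "q' \<in> cball x0 R"
  then have bound: "\<bar>\<tau> (dist (Y \<omega>) q) - \<tau> (dist (Y \<omega>) q')\<bar> \<le> 3 * (slope_Y \<omega> + tau_slope \<tau> R) * dist q q'" for \<omega>
    using S0plus_dist_diff_le[OF \<tau>] unfolding slope_Y_def by simp
  have "\<bar>v q - v q'\<bar> \<le> (\<integral>\<omega>. \<bar>\<tau> (dist (Y \<omega>) q) - \<tau> (dist (Y \<omega>) q')\<bar> \<partial>P)"
    unfolding var_fun_diff by (rule integral_abs_bound)
  also have "\<dots> \<le> (\<integral>\<omega>. 3 * (slope_Y \<omega> + tau_slope \<tau> R) * dist q q' \<partial>P)"
    using integrable_slope_Y integrable_tau_dist_diff bound by (intro integral_mono) auto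
  also have "\<dots> = 3 * (expectation slope_Y + tau_slope \<tau> R) * dist q q'"
    using integrable_slope_Y prob_space by simp
  finally show "dist (v q) (v q') \<le> 3 * (expectation slope_Y + tau_slope \<tau> R) * dist q q'"
    by (simp add: dist_real_def)
next
  show "0 \<le> 3 * (expectation slope_Y + tau_slope \<tau> R)"
    using tau_slope_nonneg[OF \<tau>] slope_Y_nonneg by (simp add: integral_nonneg_AE)
qed

lemma continuous_var_fun: "continuous_on UNIV v"
proof (intro continuous_at_imp_continuous_on ballI)
  fix q :: 'q
  have "continuous_on (cball x0 (dist x0 q + 1)) v"
    by (rule lipschitz_on_continuous_on[OF var_fun_lipschitz_on_cball])
  moreover have "q \<in> ball x0 (dist x0 q + 1)" by simp
  then have "q \<in> interior (cball x0 (dist x0 q + 1))"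
    using interior_maximal[OF ball_subset_cball open_ball] by blast
  ultimately show "isCont v q" by (rule continuous_on_interior)
qed

lemma var_fun_midpoint:
  assumes "dist a c = dist a b / 2" "dist b c = dist a b / 2"
  shows "v c \<le> (v a + v b) / 2"
proof -
  have "v c - v a \<le> (\<integral>\<omega>. (\<tau> (dist (Y \<omega>) b) - \<tau> (dist (Y \<omega>) a)) / 2 \<partial>P)"
    unfolding var_fun_diff
  proof (rule integral_mono[OF integrable_tau_dist_diff])
    fix \<omega>
    have "\<tau> (dist (Y \<omega>) c) \<le> (\<tau> (dist (Y \<omega>) a) + \<tau> (dist (Y \<omega>) b)) / 2"
      by (rule S0plus_le_midpoint[OF \<tau>]) (use hadamard_midpoint_dist_le[OF hadamard assms, of "Y \<omega>"] in auto)
    then show "\<tau> (dist (Y \<omega>) c) - \<tau> (dist (Y \<omega>) a) \<le> (\<tau> (dist (Y \<omega>) b) - \<tau> (dist (Y \<omega>) a)) / 2"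
      by simp
  qed (use integrable_tau_dist_diff in simp)
  also have "\<dots> = (v b - v a) / 2" using var_fun_diff[of b a] by simp
  finally show ?thesis by simp
qed

lemma var_fun_lower_bound: "v q \<ge> - expectation slope_Y * dist x0 q"
proof -
  have "- (slope_Y \<omega> * dist x0 q) \<le> \<tau> (dist (Y \<omega>) q) - \<tau> (dist (Y \<omega>) x0)" for \<omega>
    unfolding slope_Y_def by (rule S0plus_dist_diff_ge[OF \<tau>])
  then have "(\<integral>\<omega>. - (slope_Y \<omega> * dist x0 q) \<partial>P) \<le> v q"
    unfolding var_fun_def using integrable_slope_Y integrable_tau_dist_diff
    by (intro integral_mono) auto
  then show ?thesis by simp
qed

text \<open>Where \<open>dist (Y \<omega>) x0 \<le> \<rho>\<close> the integrand is at least \<open>\<tau> (dist x0 q - \<rho>) - \<tau> \<rho>\<close>, which grows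
  linearly in \<open>dist x0 q\<close>; elsewhere it is at least \<open>- slope_Y \<omega> * dist x0 q\<close>, whose mean is
  small for large \<open>\<rho>\<close>.\<close>
lemma var_fun_ge_bulk_tail:
  assumes "0 \<le> \<rho>" "2 * \<rho> \<le> dist x0 q"
  shows "(\<integral>\<omega>. (if dist (Y \<omega>) x0 \<le> \<rho> then 1 else 0 :: real) \<partial>P) * (\<tau> (dist x0 q - \<rho>) - \<tau> \<rho>)
      - dist x0 q * (\<integral>\<omega>. slope_Y \<omega> * (if dist (Y \<omega>) x0 > \<rho> then 1 else 0) \<partial>P) \<le> v q"
proof -
  define t where "t \<omega> = (if dist (Y \<omega>) x0 \<le> \<rho> then 1 else 0 :: real)" for \<omega>
  define s where "s \<omega> = slope_Y \<omega> * (if dist (Y \<omega>) x0 > \<rho> then 1 else 0)" for \<omega>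
  define A where "A = \<tau> (dist x0 q - \<rho>) - \<tau> \<rho>"
  have [measurable]: "t \<in> borel_measurable P" "s \<in> borel_measurable P"
    unfolding t_def s_def by measurable
  have t_int: "integrable P t"
    by (rule Bochner_Integration.integrable_bound[of P "\<lambda>_. 1::real"]) (auto simp: t_def)
  have s_int: "integrable P s"
    by (rule Bochner_Integration.integrable_bound[OF integrable_slope_Y])
      (auto simp: s_def slope_Y_nonneg)
  have "t \<omega> * A - dist x0 q * s \<omega> \<le> \<tau> (dist (Y \<omega>) q) - \<tau> (dist (Y \<omega>) x0)" for \<omega>
  proof (cases "dist (Y \<omega>) x0 \<le> \<rho>")
    case True
    have "dist x0 q \<le> dist (Y \<omega>) x0 + dist (Y \<omega>) q" by (metis dist_commute dist_triangle)
    then have "\<tau> (dist x0 q - \<rho>) \<le> \<tau> (dist (Y \<omega>) q)"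
      using True assms by (intro S0plus_mono[OF \<tau>]) auto
    moreover have "\<tau> (dist (Y \<omega>) x0) \<le> \<tau> \<rho>" using True by (intro S0plus_mono[OF \<tau>]) auto
    ultimately show ?thesis using True by (simp add: t_def s_def A_def)
  next
    case False
    then show ?thesis using S0plus_dist_diff_ge[OF \<tau>, of "Y \<omega>" x0 q]
      by (simp add: t_def s_def slope_Y_def mult.commute)
  qed
  then have "(\<integral>\<omega>. t \<omega> * A - dist x0 q * s \<omega> \<partial>P) \<le> v q"
    unfolding var_fun_def using t_int s_int integrable_tau_dist_diff by (intro integral_mono) auto
  moreover have "(\<integral>\<omega>. t \<omega> * A - dist x0 q * s \<omega> \<partial>P) = (\<integral>\<omega>. t \<omega> \<partial>P) * A - dist x0 q * (\<integral>\<omega>. s \<omega> \<partial>P)"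
    using t_int s_int by simp
  ultimately have "(\<integral>\<omega>. t \<omega> \<partial>P) * A - dist x0 q * (\<integral>\<omega>. s \<omega> \<partial>P) \<le> v q" by simp
  then show ?thesis unfolding t_def s_def A_def .
qed

lemma var_fun_coercive: "\<exists>R. \<forall>q. R \<le> dist x0 q \<longrightarrow> C \<le> v q"
proof -
  define c where "c = deriv \<tau> 1"
  have c: "c > 0" unfolding c_def by (rule S0plus_deriv_pos[OF \<tau>]) simp
  obtain N :: nat where
    tail: "(\<integral>\<omega>. slope_Y \<omega> * (if dist (Y \<omega>) x0 > N then 1 else 0) \<partial>P) < c/4" and
    bulk: "1/2 < (\<integral>\<omega>. (if dist (Y \<omega>) x0 \<le> N then 1 else 0 :: real) \<partial>P)"
    using exists_radius_small_tail[OF integrable_slope_Y slope_Y_nonneg, of "\<lambda>\<omega>. dist (Y \<omega>) x0" "c/4"] c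
    by auto
  define \<rho> where "\<rho> = real N"
  define K where "K = (4 * C + 2 * (c * \<rho>) + 2 * c + 2 * \<tau> \<rho>) / c"
  have "C \<le> v q" if q: "max (2 * \<rho>) K \<le> dist x0 q" for q
  proof -
    define R where "R = dist x0 q"
    define A where "A = \<tau> (R - \<rho>) - \<tau> \<rho>"
    have R: "2 * \<rho> \<le> R" "K \<le> R" "0 \<le> \<rho>" using q unfolding R_def \<rho>_def by auto
    define Et where "Et = (\<integral>\<omega>. (if dist (Y \<omega>) x0 \<le> \<rho> then 1 else 0 :: real) \<partial>P)"
    define Es where "Es = (\<integral>\<omega>. slope_Y \<omega> * (if dist (Y \<omega>) x0 > \<rho> then 1 else 0) \<partial>P)"
    have "0 \<le> A" unfolding A_def using S0plus_mono[OF \<tau>, of \<rho> "R - \<rho>"] R by simp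
    then have "(1/2) * A \<le> Et * A" using bulk unfolding Et_def \<rho>_def by (intro mult_right_mono) auto
    moreover have "R * Es \<le> R * (c / 4)"
      using tail zero_le_dist[of x0 q] unfolding Es_def \<rho>_def R_def by (intro mult_left_mono) auto
    moreover have "R * (c / 4) = c * R / 4" by simp
    moreover have "Et * A - R * Es \<le> v q"
      using var_fun_ge_bulk_tail[of \<rho> q] R unfolding Et_def Es_def A_def R_def by simp
    moreover have "c * R - c * \<rho> - c - \<tau> \<rho> \<le> A"
      unfolding A_def c_def using S0plus_ge_linear[OF \<tau>, of "R - \<rho>"] R by (simp add: algebra_simps)
    moreover have "4 * C + 2 * (c * \<rho>) + 2 * c + 2 * \<tau> \<rho> \<le> c * R"
      using R(2) c unfolding K_def by (simp add: pos_divide_le_eq mult.commute)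
    ultimately show ?thesis by linarith
  qed
  then show ?thesis by blast
qed

lemma var_fun_bdd_below: "bdd_below (range v)"
proof -
  obtain R where R: "\<And>q. R \<le> dist x0 q \<Longrightarrow> 0 \<le> v q" using var_fun_coercive[of 0] by blast
  have E: "0 \<le> expectation slope_Y" by (rule integral_nonneg_AE) (simp add: slope_Y_nonneg)
  have "- expectation slope_Y * max R 0 \<le> v q" for q
  proof (cases "R \<le> dist x0 q")
    case True
    then show ?thesis using R[of q] mult_nonneg_nonneg[OF E, of "max R 0"] by simp
  next
    case False
    have "expectation slope_Y * dist x0 q \<le> expectation slope_Y * max R 0"
      using False E by (intro mult_left_mono) auto
    then show ?thesis using var_fun_lower_bound[of q] by linarith
  qed
  then show ?thesis by (intro bdd_belowI2)
qed

text \<open>The sublevel sets \<open>{v \<le> inf v + 1/(n+1)}\<close> are nested, bounded and closed under midpoints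
  (\<open>v\<close> is midpoint convex), so a sequence of near-closest points to \<open>x0\<close> in them is Cauchy.\<close>
lemma var_fun_attains_min: "\<exists>p. \<forall>q. v p \<le> v q"
proof -
  define I where "I = Inf (range v)"
  have I: "I \<le> v q" for q unfolding I_def by (rule cInf_lower[OF _ var_fun_bdd_below]) simp
  define S where "S n = {q. v q \<le> I + inverse (real (Suc n))}" for n
  have S_ne: "S n \<noteq> {}" for n
  proof -
    have "Inf (range v) < I + inverse (real (Suc n))" unfolding I_def by simp
    then obtain q where "v q < I + inverse (real (Suc n))"
      using cInf_less_iff[OF _ var_fun_bdd_below] by auto
    then show ?thesis unfolding S_def by (auto intro: less_imp_le)
  qed
  have "decseq S" unfolding decseq_def S_def
    by (auto intro: order_trans simp: inverse_le_iff_le)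
  moreover have "\<exists>c\<in>S n. dist a c = dist a b / 2 \<and> dist b c = dist a b / 2"
    if "a \<in> S n" "b \<in> S n" for n a b
  proof -
    obtain c where c: "dist a c = dist a b / 2" "dist b c = dist a b / 2"
      using hadamard_midpoint[OF hadamard, of a b] by blast
    then have "c \<in> S n" using var_fun_midpoint[OF c] that unfolding S_def by auto
    with c show ?thesis by blast
  qed
  moreover obtain R where R: "\<And>q. R \<le> dist x0 q \<Longrightarrow> 2 \<le> v q" using var_fun_coercive[of 2] by blast
  have "infdist x0 (S n) \<le> R" for n
  proof -
    obtain z where z: "z \<in> S n" using S_ne by blast
    have "inverse (real (Suc n)) \<le> 1" by (simp add: inverse_le_1_iff)
    then have "v z \<le> I + 1" using z unfolding S_def by simp
    then have "v z < 2" using I[of x0] var_fun_base by simp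
    then show ?thesis using infdist_le2[OF z, of x0 R] R[of z] by fastforce
  qed
  moreover obtain p where p: "\<And>n. p n \<in> S n" "\<And>n. dist x0 (p n) \<le> infdist x0 (S n) + inverse (real (Suc n))"
    using exists_infdist_minimizing_seq[of S x0] S_ne by blast
  ultimately have "Cauchy p" by (intro hadamard_minimizing_seq_Cauchy[OF hadamard]) auto
  then obtain m where m: "p \<longlonglongrightarrow> m" using Cauchy_convergent_iff convergent_def by blast
  have "v m \<le> I"
  proof (rule LIMSEQ_le)
    show "(\<lambda>n. v (p n)) \<longlonglongrightarrow> v m"
      using continuous_var_fun by (intro isCont_tendsto_compose[OF _ m]) (simp add: continuous_on_eq_continuous_at)
    show "(\<lambda>n. I + inverse (real (Suc n))) \<longlonglongrightarrow> I" by (rule LIMSEQ_inverse_real_of_nat_add)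
  qed (use p(1) in \<open>auto simp: S_def\<close>)
  then show ?thesis using I by (blast intro: order_trans)
qed

lemma geod_convex_fun_var_fun: "geod_convex_fun v"
  unfolding geod_convex_fun_def
proof (intro allI impI)
  fix q p :: 'q and \<gamma> assume g: "geodesic_between q p \<gamma>"
  show "convex_on {0..dist q p} (v \<circ> \<gamma>)"
  proof (rule midpoint_convex_imp_convex_on)
    show "continuous_on {0..dist q p} (v \<circ> \<gamma>)"
      by (rule continuous_on_compose[OF continuous_on_geodesic_between[OF g] continuous_on_subset[OF continuous_var_fun]]) simp
    show "(v \<circ> \<gamma>) ((s + u) / 2) \<le> ((v \<circ> \<gamma>) s + (v \<circ> \<gamma>) u) / 2"
      if "s \<in> {0..dist q p}" "u \<in> {0..dist q p}" for s u
      using var_fun_midpoint[OF geodesic_between_midpoint[OF g that]] by simp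
  qed
qed

lemma frechet_means_change_base: "frechet_means P Y \<tau> x1 = frechet_means P Y \<tau> x0"
  unfolding frechet_means_def var_fun_change_base[of x1] by simp

lemma frechet_means_nonempty: "frechet_means P Y \<tau> x0 \<noteq> {}"
  unfolding frechet_means_def using var_fun_attains_min by blast

lemma closed_frechet_means: "closed (frechet_means P Y \<tau> x0)"
  unfolding frechet_means_def
  by (intro closed_Collect_all closed_Collect_le continuous_var_fun continuous_on_const)

lemma bounded_frechet_means: "bounded (frechet_means P Y \<tau> x0)"
proof -
  obtain R where R: "\<And>q. R \<le> dist x0 q \<Longrightarrow> 1 \<le> v q" using var_fun_coercive[of 1] by blast
  have "frechet_means P Y \<tau> x0 \<subseteq> cball x0 R"
  proof
    fix q assume "q \<in> frechet_means P Y \<tau> x0"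
    then have "v q \<le> v x0" unfolding frechet_means_def by blast
    then have "v q \<le> 0" by (simp add: var_fun_base)
    then show "q \<in> cball x0 R" using R[of q] by force
  qed
  then show ?thesis using bounded_cball bounded_subset by blast
qed

lemma geod_convex_set_frechet_means: "geod_convex_set (frechet_means P Y \<tau> x0)"
  unfolding geod_convex_set_def
proof (intro ballI impI allI subsetI)
  fix q p :: 'q and \<gamma> z
  assume q: "q \<in> frechet_means P Y \<tau> x0" and p: "p \<in> frechet_means P Y \<tau> x0"
    and "q \<noteq> p" and g: "geodesic_between q p \<gamma>" and "z \<in> \<gamma> ` {0..dist q p}"
  then obtain t where t: "t \<in> {0..dist q p}" "z = \<gamma> t" by blast
  define D where "D = dist q p"
  have "D > 0" using \<open>q \<noteq> p\<close> unfolding D_def by simp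
  have \<gamma>: "\<gamma> 0 = q" "\<gamma> D = p" using g unfolding geodesic_between_def D_def by auto
  have cv: "convex_on {0..D} (v \<circ> \<gamma>)"
    using geod_convex_fun_var_fun \<open>q \<noteq> p\<close> g unfolding geod_convex_fun_def D_def by blast
  have "0 \<le> t / D" "t / D \<le> 1" using t \<open>D > 0\<close> unfolding D_def by auto
  then have "(v \<circ> \<gamma>) ((1 - t/D) *\<^sub>R 0 + (t/D) *\<^sub>R D) \<le> (1 - t/D) * (v \<circ> \<gamma>) 0 + (t/D) * (v \<circ> \<gamma>) D"
    using \<open>D > 0\<close> by (intro convex_onD[OF cv]) auto
  moreover have "v q = v p" using q p unfolding frechet_means_def by (auto intro: antisym)
  ultimately have "v z \<le> v q" using t \<gamma> \<open>D > 0\<close> by (simp add: algebra_simps)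
  then show "z \<in> frechet_means P Y \<tau> x0" using q unfolding frechet_means_def by (auto intro: order_trans)
qed

lemma frechet_means_subset_support:
  assumes C: "closed C" "geod_convex_set C" and supp: "measure P {\<omega> \<in> space P. Y \<omega> \<in> C} = 1"
  shows "frechet_means P Y \<tau> x0 \<subseteq> C"
proof
  fix q assume q: "q \<in> frechet_means P Y \<tau> x0"
  show "q \<in> C"
  proof (rule ccontr)
    assume "q \<notin> C"
    moreover have "C \<noteq> {}" using supp by auto
    ultimately obtain \<pi> where "\<pi> \<in> C" and closer: "\<And>y. y \<in> C \<Longrightarrow> dist y \<pi> < dist y q"
      using hadamard_projection_closer[OF hadamard C] by blast
    have "AE \<omega> in P. Y \<omega> \<in> C" using AE_prob_1[OF supp] by auto
    then have "AE \<omega> in P. \<tau> (dist (Y \<omega>) \<pi>) - \<tau> (dist (Y \<omega>) x0) < \<tau> (dist (Y \<omega>) q) - \<tau> (dist (Y \<omega>) x0)"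
      by eventually_elim (use S0plus_strict_mono[OF \<tau>] closer in auto)
    then have "v \<pi> < v q" unfolding var_fun_def
      by (rule integral_less_AE_space[OF integrable_tau_dist_diff integrable_tau_dist_diff])
        (simp add: emeasure_space_1)
    then show False using q unfolding frechet_means_def by (auto simp: not_le[symmetric])
  qed
qed

end

theorem mainTheorem6:
  fixes P :: "'w measure" and Y :: "'w \<Rightarrow> 'q::complete_space"
    and x0 :: 'q and \<tau> :: "real \<Rightarrow> real"
  assumes "prob_space P"
    and "hadamard TYPE('q)"
    and "Y \<in> measurable P borel"
    and "\<tau> \<in> S0plus"
    and "(\<integral>\<^sup>+ \<omega>. ennreal (tau_deriv \<tau> (dist (Y \<omega>) x0)) \<partial>P) < \<infinity>"
  shows "((\<forall>q. integrable P (\<lambda>\<omega>. \<tau> (dist (Y \<omega>) q) - \<tau> (dist (Y \<omega>) x0)))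
      \<and> geod_convex_fun (var_fun P Y \<tau> x0))
    \<and> (frechet_means P Y \<tau> x0 \<noteq> {} \<and> closed (frechet_means P Y \<tau> x0)
      \<and> bounded (frechet_means P Y \<tau> x0) \<and> geod_convex_set (frechet_means P Y \<tau> x0)
      \<and> (\<forall>x0'. frechet_means P Y \<tau> x0' = frechet_means P Y \<tau> x0))
    \<and> (\<forall>C. closed C \<longrightarrow> geod_convex_set C \<longrightarrow>
      measure P {\<omega> \<in> space P. Y \<omega> \<in> C} = 1 \<longrightarrow> frechet_means P Y \<tau> x0 \<subseteq> C)"
proof -
  interpret hadamard_frechet P Y x0 \<tau>
    using assms by (simp add: hadamard_frechet_def hadamard_frechet_axioms_def)
  show ?thesis
  proof (intro conjI allI impI)
    show "integrable P (\<lambda>\<omega>. \<tau> (dist (Y \<omega>) q) - \<tau> (dist (Y \<omega>) x0))" for q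
      by (rule integrable_tau_dist_diff)
  qed (fact geod_convex_fun_var_fun frechet_means_nonempty closed_frechet_means
      bounded_frechet_means geod_convex_set_frechet_means frechet_means_change_base
      frechet_means_subset_support)+
qed

end
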